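(* For all integers $n\geq 3$ and $k\geq 0$, $$nI_{n,k}=(k+1)I_{n-1,k}+(n-k)I_{n-1,k-1}+[(k+1)^2+n-2]I_{n-2,k}+[2k(n-k-1)-n+3]I_{n-2,k-1}+[(n-k)^2+n-2]I_{n-2,k-2},$$ where $I_{m,j}=0$ for $j<0$.
   Context: For a permutation $\pi=a_1a_2\cdots a_m$ of $[m]=\{1,\ldots,m\}$, a descent is an index $1\leq i\leq m-1$ with $a_i>a_{i+1}$, and ${\rm d}(\pi)$ is the number of descents. An involution of $[m]$ is a permutation $\pi$ with $\pi^2=\mathrm{id}$. $I_{m,j}$ denotes the number of involutions of $[m]$ with exactly $j$ descents (so $I_{m,j}=0$ for $j<0$ or $j>m-1$). *)

theory Defs
  imports "HOL-Combinatorics.Permutations"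
begin

definition des :: "nat \<Rightarrow> (nat \<Rightarrow> nat) \<Rightarrow> nat" where
  "des m p = card {i. 1 \<le> i \<and> i \<le> m - 1 \<and> p i > p (Suc i)}"

definition involutions :: "nat \<Rightarrow> (nat \<Rightarrow> nat) set" where
  "involutions m = {p. p permutes {1..m} \<and> p \<circ> p = id}"

definition Inv :: "nat \<Rightarrow> int \<Rightarrow> int" where
  "Inv m j = (if j < 0 then 0 else int (card {p \<in> involutions m. int (des m p) = j}))"

end

theory Submission
  imports Defs "HOL-Library.Multiset" "HOL-Library.Product_Lexorder"
begin

text \<open>Let T(n, m) be the number of symmetric m x m matrices of natural numbers with entry
  sum n. Send a pair (p, f), where p is an involution of [n] and f : [n] -> [0, m) is weakly
  increasing and strictly increasing at the descents of p, to the multiset of the pairs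
  (f i, f (p i)). This is a bijection onto those matrices: f is read off from the sorted
  multiset, and p matches each pair with a mirror image of the same rank. Counting the f for a
  given p by stars and bars yields T(n, m) = sum_k I(n, k) C(m + n - 1 - k, n).

  On the other hand, removing an occurrence of an entry together with its mirror image yields
  n T(n, m) = m T(n - 1, m) + (m^2 + n - 2) T(n - 2, m). Substituting the first formula into this
  one and applying Pascal's rule and absorption, both sides become combinations of
  C(m + n - 1 - k, n), k < n. These functions of m are triangular in k (take m = 1, 2, ...),
  so the coefficients agree, and this is the recurrence.\<close>

section \<open>Weakly increasing sequences with prescribed strict ascents\<close>

definition compatible_seqs :: "nat \<Rightarrow> nat \<Rightarrow> nat set \<Rightarrow> (nat \<Rightarrow> nat) set" where
  "compatible_seqs n v D = {f. (\<forall>i. i \<notin> {1..n} \<longrightarrow> f i = 0) \<and> (\<forall>i\<in>{1..n}. f i < v) \<and>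
     (\<forall>i. 1 \<le> i \<longrightarrow> i < n \<longrightarrow> f i \<le> f (Suc i) \<and> (i \<in> D \<longrightarrow> f i < f (Suc i)))}"

lemma compatible_seqs_mono:
  assumes "f \<in> compatible_seqs n v D" "1 \<le> i" "i \<le> j" "j \<le> n"
  shows "f i \<le> f j"
  using assms(3,4)
proof (induction j rule: dec_induct)
  case (step j)
  then have "f j \<le> f (Suc j)" using assms(1,2) unfolding compatible_seqs_def by auto
  with step show ?case by simp
qed simp

lemma compatible_seqs_0: "compatible_seqs 0 v D = {\<lambda>_. 0}"
  unfolding compatible_seqs_def by auto

lemma compatible_seqs_restrict:
  assumes f: "f \<in> compatible_seqs (Suc n) v D"
  shows "f(Suc n := 0) \<in> compatible_seqs n (if 1 \<le> n \<and> n \<in> D then f (Suc n) else Suc (f (Suc n))) D"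
proof -
  have "f i < (if 1 \<le> n \<and> n \<in> D then f (Suc n) else Suc (f (Suc n)))" if "1 \<le> i" "i \<le> n" for i
  proof -
    have "f i \<le> f n" using compatible_seqs_mono[OF f that] by simp
    moreover have "f n \<le> f (Suc n) \<and> (1 \<le> n \<and> n \<in> D \<longrightarrow> f n < f (Suc n))"
      using f that unfolding compatible_seqs_def by auto
    ultimately show ?thesis by auto
  qed
  then show ?thesis using f unfolding compatible_seqs_def by auto
qed

lemma compatible_seqs_extend:
  assumes a: "a < v" and g: "g \<in> compatible_seqs n (if 1 \<le> n \<and> n \<in> D then a else Suc a) D"
  shows "g(Suc n := a) \<in> compatible_seqs (Suc n) v D"
proof -
  have g_bound: "g i < (if 1 \<le> n \<and> n \<in> D then a else Suc a)" if "1 \<le> i" "i \<le> n" for i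
    using g that unfolding compatible_seqs_def by auto
  have g_last: "1 \<le> n \<Longrightarrow> g n \<le> a \<and> (n \<in> D \<longrightarrow> g n < a)"
    using g_bound[of n] by (cases "n \<in> D") auto
  show ?thesis unfolding compatible_seqs_def
  proof (intro CollectI conjI allI impI ballI)
    fix i assume "i \<notin> {1..Suc n}" then show "(g(Suc n := a)) i = 0"
      using g unfolding compatible_seqs_def by auto
  next
    fix i assume "i \<in> {1..Suc n}" then show "(g(Suc n := a)) i < v"
      using g_bound[of i] a by (cases "i = Suc n") (auto split: if_splits)
  next
    fix i assume "1 \<le> i" "i < Suc n" then show "(g(Suc n := a)) i \<le> (g(Suc n := a)) (Suc i)"
      using g_last g unfolding compatible_seqs_def by (cases "i = n") auto
  next
    fix i assume "1 \<le> i" "i < Suc n" "i \<in> D" then show "(g(Suc n := a)) i < (g(Suc n := a)) (Suc i)"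
      using g_last g unfolding compatible_seqs_def by (cases "i = n") auto
  qed
qed

lemma compatible_seqs_Suc:
  "compatible_seqs (Suc n) v D =
     (\<Union>a<v. (\<lambda>g. g(Suc n := a)) ` compatible_seqs n (if 1 \<le> n \<and> n \<in> D then a else Suc a) D)"
proof (intro equalityI subsetI)
  fix f assume f: "f \<in> compatible_seqs (Suc n) v D"
  then have "f (Suc n) < v" unfolding compatible_seqs_def by auto
  moreover have "f = (f(Suc n := 0))(Suc n := f (Suc n))" by simp
  ultimately show "f \<in> (\<Union>a<v. (\<lambda>g. g(Suc n := a)) ` compatible_seqs n (if 1 \<le> n \<and> n \<in> D then a else Suc a) D)"
    using compatible_seqs_restrict[OF f] by blast
qed (auto intro: compatible_seqs_extend)

lemma finite_compatible_seqs: "finite (compatible_seqs n v D)"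
  by (induction n arbitrary: v) (simp_all add: compatible_seqs_0 compatible_seqs_Suc)

lemma card_compatible_seqs_Suc:
  "card (compatible_seqs (Suc n) v D) =
     (\<Sum>a<v. card (compatible_seqs n (if 1 \<le> n \<and> n \<in> D then a else Suc a) D))"
proof -
  have inj: "inj_on (\<lambda>g. g(Suc n := a)) (compatible_seqs n b D)" for a b
  proof (rule inj_onI)
    fix g h assume "g \<in> compatible_seqs n b D" "h \<in> compatible_seqs n b D"
      and eq: "g(Suc n := a) = h(Suc n := a)"
    then have "g (Suc n) = h (Suc n)" unfolding compatible_seqs_def by auto
    then show "g = h" using eq by (metis fun_upd_triv fun_upd_upd)
  qed
  show ?thesis unfolding compatible_seqs_Suc
    by (subst card_UN_disjoint) (auto simp: finite_compatible_seqs card_image[OF inj] dest: fun_cong[where x="Suc n"])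
qed

lemma sum_choose_shifted_upper: "(\<Sum>a<v. (a + c) choose n) + (c choose Suc n) = (v + c) choose Suc n"
  by (induction v) simp_all

lemma card_marked_prefix_Suc:
  "card {i\<in>D. 1 \<le> i \<and> i < Suc n} = card {i\<in>D. 1 \<le> i \<and> i < n} + (if 1 \<le> n \<and> n \<in> D then 1 else 0)"
proof -
  have "{i\<in>D. 1 \<le> i \<and> i < Suc n} =
      (if 1 \<le> n \<and> n \<in> D then insert n {i\<in>D. 1 \<le> i \<and> i < n} else {i\<in>D. 1 \<le> i \<and> i < n})"
    by (auto simp: less_Suc_eq)
  moreover have "finite {i\<in>D. 1 \<le> i \<and> i < n}" by (rule finite_subset[of _ "{..<n}"]) auto
  ultimately show ?thesis by simp
qed

lemma card_marked_prefix_le: "card {i\<in>D. 1 \<le> i \<and> i < n} \<le> n - 1"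
proof -
  have "card {i\<in>D. 1 \<le> i \<and> i < n} \<le> card {1..<n}" by (rule card_mono) auto
  then show ?thesis by simp
qed

text \<open>Stars and bars: strict steps at the marked positions each use up one of the v values.\<close>
lemma card_compatible_seqs:
  "card (compatible_seqs n v D) = (v + n - 1 - card {i\<in>D. 1 \<le> i \<and> i < n}) choose n"
proof (induction n arbitrary: v)
  case 0 then show ?case by (simp add: compatible_seqs_0)
next
  case (Suc n)
  define k where "k = card {i\<in>D. 1 \<le> i \<and> i < Suc n}"
  have k_le: "k \<le> n" unfolding k_def using card_marked_prefix_le[of D "Suc n"] by simp
  have "card (compatible_seqs (Suc n) v D) = (\<Sum>a<v. (a + (n - k)) choose n)"
    unfolding card_compatible_seqs_Suc Suc.IH k_def card_marked_prefix_Suc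
    using card_marked_prefix_le[of D n] by (intro sum.cong) auto
  also have "\<dots> = (v + (n - k)) choose Suc n"
    using sum_choose_shifted_upper[where v=v and c="n - k" and n=n] by (simp add: binomial_eq_0)
  finally show ?case using k_le unfolding k_def by simp
qed

section \<open>Symmetric matrices and involutions\<close>

definition descent_set :: "(nat \<Rightarrow> nat) \<Rightarrow> nat set" where
  "descent_set p = {i. p (Suc i) < p i}"

lemma des_eq_card_descent_set: "des n p = card {i\<in>descent_set p. 1 \<le> i \<and> i < n}"
  unfolding des_def descent_set_def by (intro arg_cong[where f=card]) auto

lemma des_less: "1 \<le> n \<Longrightarrow> des n p < n"
  using card_marked_prefix_le[of "descent_set p" n] unfolding des_eq_card_descent_set by simp

lemma finite_involutions: "finite (involutions n)"
  by (rule finite_subset[OF _ finite_permutations[of "{1..n}"]]) (auto simp: involutions_def)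

lemma involutions_permutes: "p \<in> involutions n \<Longrightarrow> p permutes {1..n}"
  unfolding involutions_def by simp

lemma involution_involutive [simp]: "p \<in> involutions n \<Longrightarrow> p (p i) = i"
  unfolding involutions_def by (simp add: fun_eq_iff)

lemma involution_in_range: "p \<in> involutions n \<Longrightarrow> i \<in> {1..n} \<Longrightarrow> p i \<in> {1..n}"
  by (metis involutions_permutes permutes_in_image)

lemma involution_inj: "p \<in> involutions n \<Longrightarrow> inj p"
  by (metis involutions_permutes permutes_inj)

lemma compatible_seqs_level_increasing:
  assumes p: "inj p" and f: "f \<in> compatible_seqs n m (descent_set p)"
    and ij: "1 \<le> i" "i < j" "j \<le> n" and eq: "f i = f j"
  shows "p i < p j"
proof -
  have ascent: "p k < p (Suc k)" if "1 \<le> k" "k < n" "f k = f (Suc k)" for k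
  proof -
    have "\<not> p (Suc k) < p k" using f that unfolding compatible_seqs_def descent_set_def by auto
    moreover have "p k \<noteq> p (Suc k)" using injD[OF p] by fastforce
    ultimately show ?thesis by simp
  qed
  have "Suc i \<le> j" using ij by simp
  then show ?thesis using ij(3) eq
  proof (induction j rule: dec_induct)
    case base then show ?case using ascent[of i] ij by simp
  next
    case (step k)
    have "f i \<le> f k" using compatible_seqs_mono[OF f, of i k] ij step.hyps by simp
    moreover have "f k \<le> f (Suc k)" using compatible_seqs_mono[OF f, of k "Suc k"] ij step.hyps by simp
    ultimately have "f i = f k" "f k = f (Suc k)" using step.prems by simp_all
    then have "p i < p k" "p k < p (Suc k)"
      using step.IH step.prems step.hyps ij ascent[of k] by simp_all
    then show ?case by simp
  qed
qed

text \<open>A swap-invariant multiset of n pairs in {..<m} \<times> {..<m} is the same as a symmetric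
  m \<times> m matrix of natural numbers with entry sum n.\<close>
definition sym_msets :: "nat \<Rightarrow> nat \<Rightarrow> (nat \<times> nat) multiset set" where
  "sym_msets n m = {M \<in> multisets_of_size ({..<m} \<times> {..<m}) n. image_mset prod.swap M = M}"

lemma finite_sym_msets: "finite (sym_msets n m)"
  unfolding sym_msets_def by (rule finite_subset[OF _ finite_multisets_of_size]) auto

definition pair_mset :: "nat \<Rightarrow> (nat \<Rightarrow> nat) \<Rightarrow> (nat \<Rightarrow> nat) \<Rightarrow> (nat \<times> nat) multiset" where
  "pair_mset n p f = image_mset (\<lambda>i. (f i, f (p i))) (mset_set {1..n})"

lemma pair_mset_in_sym_msets:
  assumes p: "p \<in> involutions n" and f: "f \<in> compatible_seqs n m (descent_set p)"
  shows "pair_mset n p f \<in> sym_msets n m"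
proof -
  define g where "g i = (f i, f (p i))" for i
  have "f i < m" if "i \<in> {1..n}" for i using f that unfolding compatible_seqs_def by auto
  then have range: "set_mset (pair_mset n p f) \<subseteq> {..<m} \<times> {..<m}"
    unfolding pair_mset_def using involution_in_range[OF p] by auto
  have "image_mset prod.swap (pair_mset n p f) = image_mset g (image_mset p (mset_set {1..n}))"
    unfolding pair_mset_def g_def using p by (simp add: image_mset.compositionality comp_def)
  also have "image_mset p (mset_set {1..n}) = mset_set (p ` {1..n})"
    using involution_inj[OF p] by (simp add: image_mset_mset_set inj_on_subset)
  also have "image_mset g (mset_set (p ` {1..n})) = pair_mset n p f"
    unfolding pair_mset_def g_def permutes_image[OF involutions_permutes[OF p]] ..
  finally show ?thesis using range unfolding sym_msets_def multisets_of_size_def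
    by (simp add: pair_mset_def)
qed

lemma sorted_pair_list:
  assumes p: "p permutes {1..n}" and f: "f \<in> compatible_seqs n m (descent_set p)"
  shows "sorted (map (\<lambda>i. (f i, f (p i))) [1..<Suc n])"
proof -
  have "(f a, f (p a)) \<le> (f b, f (p b))" if ab: "1 \<le> a" "a \<le> b" "b \<le> n" for a b
  proof (cases "f a = f b \<and> a \<noteq> b")
    case True
    then have "p a < p b"
      using compatible_seqs_level_increasing[OF permutes_inj[OF p] f, of a b] ab by simp
    moreover have "p a \<in> {1..n}" "p b \<in> {1..n}" using ab permutes_in_image[OF p, of a] permutes_in_image[OF p, of b] by auto
    ultimately show ?thesis using True compatible_seqs_mono[OF f] by simp
  next
    case False
    then show ?thesis using compatible_seqs_mono[OF f ab] by auto
  qed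
  then show ?thesis unfolding sorted_iff_nth_mono by (simp add: nth_append)
qed

lemma mset_pair_list: "mset (map (\<lambda>i. (f i, f (p i))) [1..<Suc n]) = pair_mset n p f"
  by (simp only: pair_mset_def mset_map mset_upt atLeastLessThanSuc_atLeastAtMost)

text \<open>Ranks tell apart equal pairs (f i, f (p i)) when p is recovered from the pair multiset.\<close>
definition label_rank :: "nat \<Rightarrow> (nat \<Rightarrow> 'a) \<Rightarrow> nat \<Rightarrow> nat" where
  "label_rank n lab j = card {j'\<in>{1..n}. j' < j \<and> lab j' = lab j}"

lemma label_rank_less:
  assumes "lab j1 = lab j2" "j1 < j2" "j1 \<in> {1..n}"
  shows "label_rank n lab j1 < label_rank n lab j2"
proof -
  have "insert j1 {j'\<in>{1..n}. j' < j1 \<and> lab j' = lab j1} \<subseteq> {j'\<in>{1..n}. j' < j2 \<and> lab j' = lab j2}"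
    using assms by auto
  from card_mono[OF _ this] show ?thesis unfolding label_rank_def by simp
qed

lemma label_rank_eqD:
  assumes "lab j1 = lab j2" "label_rank n lab j1 = label_rank n lab j2" "j1 \<in> {1..n}" "j2 \<in> {1..n}"
  shows "j1 = j2"
  using label_rank_less[of lab j1 j2 n] label_rank_less[of lab j2 j1 n] assms
  by (cases j1 j2 rule: linorder_cases) auto

lemma label_rank_cong:
  assumes "\<And>j. j \<in> {1..n} \<Longrightarrow> lab j = lab' j" "x \<in> {1..n}"
  shows "label_rank n lab x = label_rank n lab' x"
  unfolding label_rank_def using assms by (metis (mono_tags, lifting))

lemma label_rank_image:
  "label_rank n lab ` {j\<in>{1..n}. lab j = x} = {..<card {j\<in>{1..n}. lab j = x}}"
proof (rule card_seteq)
  show "label_rank n lab ` {j\<in>{1..n}. lab j = x} \<subseteq> {..<card {j\<in>{1..n}. lab j = x}}"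
  proof (rule image_subsetI)
    fix j assume j: "j \<in> {j\<in>{1..n}. lab j = x}"
    then have "{j'\<in>{1..n}. j' < j \<and> lab j' = lab j} \<subset> {j\<in>{1..n}. lab j = x}"
      by (simp add: psubset_eq subset_iff) blast
    then have "card {j'\<in>{1..n}. j' < j \<and> lab j' = lab j} < card {j\<in>{1..n}. lab j = x}"
      by (rule psubset_card_mono[rotated]) simp
    then show "label_rank n lab j \<in> {..<card {j\<in>{1..n}. lab j = x}}"
      unfolding label_rank_def by simp
  qed
  have "inj_on (label_rank n lab) {j\<in>{1..n}. lab j = x}"
  proof (rule inj_onI)
    fix a b assume "a \<in> {j\<in>{1..n}. lab j = x}" "b \<in> {j\<in>{1..n}. lab j = x}"
      "label_rank n lab a = label_rank n lab b"
    then show "a = b" using label_rank_eqD[of lab a b n] by simp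
  qed
  then show "card {..<card {j\<in>{1..n}. lab j = x}} \<le> card (label_rank n lab ` {j\<in>{1..n}. lab j = x})"
    by (simp add: card_image)
qed simp

lemma label_rank_involution:
  assumes p: "p \<in> involutions n" and f: "f \<in> compatible_seqs n m (descent_set p)"
    and i: "i \<in> {1..n}"
  shows "label_rank n (\<lambda>j. (f j, f (p j))) (p i) = label_rank n (\<lambda>j. (f j, f (p j))) i"
proof -
  define lab where "lab j = (f j, f (p j))" for j
  define R where "R = {j\<in>{1..n}. j < i \<and> lab j = lab i}"
  have level: "p j < p j'" if "j \<in> {1..n}" "j' \<in> {1..n}" "j < j'" "f j = f j'" for j j'
    using compatible_seqs_level_increasing[OF involution_inj[OF p] f] that by simp
  have "p ` R = {j'\<in>{1..n}. j' < p i \<and> lab j' = lab (p i)}"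
  proof (intro equalityI subsetI)
    fix x assume "x \<in> p ` R"
    then obtain j where "j \<in> {1..n}" "j < i" "lab j = lab i" "x = p j" unfolding R_def by blast
    then show "x \<in> {j'\<in>{1..n}. j' < p i \<and> lab j' = lab (p i)}"
      using level[of j i] i p involution_in_range[OF p] unfolding lab_def by auto
  next
    fix j' assume j': "j' \<in> {j'\<in>{1..n}. j' < p i \<and> lab j' = lab (p i)}"
    define j where "j = p j'"
    have j: "j \<in> {1..n}" "p j = j'" "lab j = lab i"
      using j' p involution_in_range[OF p] unfolding j_def lab_def by auto
    moreover have "j < i"
      using level[of i j] j j' i by (cases i j rule: linorder_cases) (auto simp: lab_def)
    ultimately show "j' \<in> p ` R" unfolding R_def by blast
  qed
  then have "card {j'\<in>{1..n}. j' < p i \<and> lab j' = lab (p i)} = card R"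
    using card_image involution_inj[OF p] by (metis inj_on_subset subset_UNIV)
  then show ?thesis unfolding label_rank_def R_def lab_def .
qed

lemma pair_labels_eq:
  assumes p: "p \<in> involutions n" and f: "f \<in> compatible_seqs n m (descent_set p)"
    and p': "p' \<in> involutions n" and f': "f' \<in> compatible_seqs n m (descent_set p')"
    and eq: "pair_mset n p f = pair_mset n p' f'" and i: "i \<in> {1..n}"
  shows "(f i, f (p i)) = (f' i, f' (p' i))"
proof -
  define lab where "lab j = (f j, f (p j))" for j
  define lab' where "lab' j = (f' j, f' (p' j))" for j
  have sorted: "sorted (map lab [1..<Suc n])" "sorted (map lab' [1..<Suc n])"
    unfolding lab_def lab'_def
    using sorted_pair_list[OF involutions_permutes[OF p] f] sorted_pair_list[OF involutions_permutes[OF p'] f']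
    by simp_all
  have "mset (map lab [1..<Suc n]) = mset (map lab' [1..<Suc n])"
    using eq unfolding lab_def lab'_def mset_pair_list .
  then have "map lab' [1..<Suc n] = map lab [1..<Suc n]"
    using properties_for_sort[OF _ sorted(1)] sorted_sort_id[OF sorted(2)] by simp
  then show ?thesis
    using i unfolding map_eq_conv lab_def lab'_def by (auto simp del: upt_Suc)
qed

lemma pair_mset_inj:
  assumes p: "p \<in> involutions n" and f: "f \<in> compatible_seqs n m (descent_set p)"
    and p': "p' \<in> involutions n" and f': "f' \<in> compatible_seqs n m (descent_set p')"
    and eq: "pair_mset n p f = pair_mset n p' f'"
  shows "p = p'" "f = f'"
proof -
  define lab where "lab j = (f j, f (p j))" for j
  define lab' where "lab' j = (f' j, f' (p' j))" for j
  have lab_eq: "lab i = lab' i" if "i \<in> {1..n}" for i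
    using pair_labels_eq[OF p f p' f' eq that] unfolding lab_def lab'_def .
  show "f = f'"
  proof
    fix i show "f i = f' i"
      using lab_eq[of i] f f' unfolding lab_def lab'_def compatible_seqs_def by (cases "i \<in> {1..n}") auto
  qed
  show "p = p'"
  proof
    fix i show "p i = p' i"
    proof (cases "i \<in> {1..n}")
      case False
      then show ?thesis
        using permutes_not_in[OF involutions_permutes[OF p]] permutes_not_in[OF involutions_permutes[OF p']]
        by simp
    next
      case True
      have range: "p i \<in> {1..n}" "p' i \<in> {1..n}" using True involution_in_range p p' by blast+
      have "label_rank n lab (p' i) = label_rank n lab' (p' i)"
        using label_rank_cong[OF lab_eq range(2)] .
      also have "\<dots> = label_rank n lab' i"
        using label_rank_involution[OF p' f' True] unfolding lab'_def .
      also have "\<dots> = label_rank n lab i"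
        using label_rank_cong[OF lab_eq True] by simp
      also have "\<dots> = label_rank n lab (p i)"
        using label_rank_involution[OF p f True] unfolding lab_def by simp
      finally have "label_rank n lab (p' i) = label_rank n lab (p i)" .
      moreover have "lab (p' i) = lab (p i)"
        using lab_eq[OF range(2)] lab_eq[OF True] p p' unfolding lab_def lab'_def by simp
      ultimately show ?thesis using label_rank_eqD[OF _ _ range(2,1)] by metis
    qed
  qed
qed

lemma involution_matching_swapped_labels:
  fixes lab :: "nat \<Rightarrow> 'a \<times> 'a"
  assumes balanced: "\<And>x. card {j\<in>{1..n}. lab j = prod.swap x} = card {j\<in>{1..n}. lab j = x}"
  obtains p where "p \<in> involutions n"
    "\<And>i. i \<in> {1..n} \<Longrightarrow> lab (p i) = prod.swap (lab i) \<and> label_rank n lab (p i) = label_rank n lab i"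
proof -
  let ?match = "\<lambda>i j. j \<in> {1..n} \<and> lab j = prod.swap (lab i) \<and> label_rank n lab j = label_rank n lab i"
  have unique_match: "\<exists>!j. ?match i j" if i: "i \<in> {1..n}" for i
  proof -
    have "label_rank n lab i \<in> label_rank n lab ` {j\<in>{1..n}. lab j = lab i}"
      using i by blast
    then have "label_rank n lab i \<in> label_rank n lab ` {j\<in>{1..n}. lab j = prod.swap (lab i)}"
      unfolding label_rank_image balanced .
    then obtain j where "?match i j" by auto
    moreover have "j' = j" if "?match i j'" for j'
      using label_rank_eqD[of lab j' j n] that \<open>?match i j\<close> by simp
    ultimately show ?thesis by blast
  qed
  have matchI: "?match i (THE j. ?match i j)" if "i \<in> {1..n}" for i
    by (rule theI'[OF unique_match[OF that]])
  define p where "p i = (if i \<in> {1..n} then THE j. ?match i j else i)" for i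
  have p_match: "?match i (p i)" if "i \<in> {1..n}" for i
    unfolding p_def using matchI that by simp
  have p_out: "p i = i" if "i \<notin> {1..n}" for i
    unfolding p_def using that by auto
  have p_p: "p (p i) = i" for i
  proof (cases "i \<in> {1..n}")
    case True
    then show ?thesis
      using p_match[of i] p_match[of "p i"] label_rank_eqD[of lab "p (p i)" i n] by simp
  qed (simp add: p_out)
  have "p permutes {1..n}"
  proof (rule bij_imp_permutes)
    show "bij_betw p {1..n} {1..n}"
      by (rule bij_betw_byWitness[where f'=p]) (use p_p p_match in auto)
  qed (rule p_out)
  then have "p \<in> involutions n" unfolding involutions_def using p_p by (simp add: fun_eq_iff)
  then show ?thesis using that p_match by blast
qed

text \<open>At a descent of p the labels lab i \<le> lab (i + 1) cannot agree in their first component: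
  equal labels would reverse their ranks under p, and otherwise p would reverse their mirror images.\<close>
lemma fst_labels_in_compatible_seqs:
  assumes sorted: "\<And>a b. 1 \<le> a \<Longrightarrow> a \<le> b \<Longrightarrow> b \<le> n \<Longrightarrow> lab a \<le> lab b"
    and range: "\<And>i. i \<in> {1..n} \<Longrightarrow> fst (lab i) < m"
    and p: "p \<in> involutions n"
    and match: "\<And>i. i \<in> {1..n} \<Longrightarrow>
      lab (p i) = prod.swap (lab i) \<and> label_rank n lab (p i) = label_rank n lab i"
  shows "(\<lambda>i. if i \<in> {1..n} then fst (lab i) else 0) \<in> compatible_seqs n m (descent_set p)"
proof -
  have strict: "fst (lab i) < fst (lab (Suc i))"
    if i: "1 \<le> i" "i < n" and descent: "p (Suc i) < p i" for i :: nat
  proof (rule ccontr)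
    have in_range: "i \<in> {1..n}" "Suc i \<in> {1..n}" "p i \<in> {1..n}" "p (Suc i) \<in> {1..n}"
      using i involution_in_range[OF p] by auto
    have le: "lab i \<le> lab (Suc i)" "lab (p (Suc i)) \<le> lab (p i)"
      using sorted in_range descent i by (simp_all add: less_imp_le)
    assume "\<not> fst (lab i) < fst (lab (Suc i))"
    then have fst_eq: "fst (lab i) = fst (lab (Suc i))" using le(1) by (auto simp: less_eq_prod_def)
    show False
    proof (cases "lab i = lab (Suc i)")
      case True
      have "label_rank n lab i < label_rank n lab (Suc i)"
        using label_rank_less[of lab i "Suc i" n] True in_range by simp
      moreover have "label_rank n lab (p (Suc i)) < label_rank n lab (p i)"
        using label_rank_less[of lab "p (Suc i)" "p i" n] True in_range descent match[of i] match[of "Suc i"]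
        by simp
      ultimately show False using match in_range by simp
    next
      case False
      then have "snd (lab i) < snd (lab (Suc i))"
        using le(1) fst_eq by (auto simp: less_eq_prod_def prod_eq_iff)
      then show False using le(2) fst_eq match in_range by (auto simp: less_eq_prod_def)
    qed
  qed
  have mono: "fst (lab i) \<le> fst (lab (Suc i))" if "1 \<le> i" "i < n" for i
    using sorted[of i "Suc i"] that by (auto simp: less_eq_prod_def)
  show ?thesis unfolding compatible_seqs_def descent_set_def
    using range mono strict by auto
qed

lemma card_positions_eq_count:
  "card {j\<in>{1..length xs}. xs ! (j - 1) = x} = count (mset xs) x"
proof -
  have "{j\<in>{1..length xs}. xs ! (j - 1) = x} = Suc ` {i. i < length xs \<and> x = xs ! i}"
  proof (intro equalityI subsetI)
    fix j assume "j \<in> {j\<in>{1..length xs}. xs ! (j - 1) = x}"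
    then show "j \<in> Suc ` {i. i < length xs \<and> x = xs ! i}" by (intro image_eqI[of _ _ "j - 1"]) auto
  qed auto
  then show ?thesis
    by (simp add: card_image count_mset count_list_eq_length_filter length_filter_conv_card)
qed

lemma count_image_swap_swap: "count (image_mset prod.swap M) (prod.swap x) = count M x"
  by (induction M) (auto simp: prod_eq_iff)

lemma pair_mset_surj:
  assumes M: "M \<in> sym_msets n m"
  obtains p f where "p \<in> involutions n" "f \<in> compatible_seqs n m (descent_set p)" "pair_mset n p f = M"
proof -
  define L where "L = sorted_list_of_multiset M"
  have L: "mset L = M" "length L = n" "sorted L" "set L \<subseteq> {..<m} \<times> {..<m}"
    using M unfolding L_def sym_msets_def multisets_of_size_def by (auto simp flip: size_mset)
  define lab where "lab i = L ! (i - 1)" for i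
  have "card {j\<in>{1..n}. lab j = x} = count M x" for x
    using card_positions_eq_count[of L x] L unfolding lab_def by simp
  moreover have "count M (prod.swap x) = count M x" for x
    using count_image_swap_swap[of M x] M unfolding sym_msets_def by simp
  ultimately obtain p where p: "p \<in> involutions n" and
    match: "\<And>i. i \<in> {1..n} \<Longrightarrow> lab (p i) = prod.swap (lab i) \<and> label_rank n lab (p i) = label_rank n lab i"
    using involution_matching_swapped_labels[of n lab] by metis
  have lab_range: "lab i \<in> {..<m} \<times> {..<m}" if "i \<in> {1..n}" for i
    using that L nth_mem[of "i - 1" L] unfolding lab_def by fastforce
  have sorted: "lab a \<le> lab b" if "1 \<le> a" "a \<le> b" "b \<le> n" for a b
    unfolding lab_def using sorted_nth_mono[OF L(3), of "a - 1" "b - 1"] that L(2) by simp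
  define f where "f i = (if i \<in> {1..n} then fst (lab i) else 0)" for i
  have f: "f \<in> compatible_seqs n m (descent_set p)"
    unfolding f_def
  proof (rule fst_labels_in_compatible_seqs[where lab=lab])
    show "fst (lab i) < m" if "i \<in> {1..n}" for i using lab_range[OF that] by auto
  qed (use sorted p match in auto)
  have "(f i, f (p i)) = lab i" if "i \<in> {1..n}" for i
    using match[OF that] involution_in_range[OF p that] that unfolding f_def by (cases "lab i") simp
  then have "pair_mset n p f = image_mset lab (mset_set {1..n})"
    unfolding pair_mset_def by (intro image_mset_cong) simp
  also have "\<dots> = mset (map lab [1..<Suc n])"
    by (simp only: mset_map mset_upt atLeastLessThanSuc_atLeastAtMost)
  also have "map lab [1..<Suc n] = L"
    by (rule nth_equalityI) (simp_all add: L(2) lab_def del: upt_Suc)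
  finally show ?thesis using that p f L(1) by blast
qed

lemma card_sym_msets:
  "card (sym_msets n m) = (\<Sum>p\<in>involutions n. (m + n - 1 - des n p) choose n)"
proof -
  have "bij_betw (\<lambda>(p, f). pair_mset n p f)
      (SIGMA p:involutions n. compatible_seqs n m (descent_set p)) (sym_msets n m)"
  proof (rule bij_betwI')
    fix x y assume "x \<in> (SIGMA p:involutions n. compatible_seqs n m (descent_set p))"
      "y \<in> (SIGMA p:involutions n. compatible_seqs n m (descent_set p))"
    then show "((\<lambda>(p, f). pair_mset n p f) x = (\<lambda>(p, f). pair_mset n p f) y) = (x = y)"
      using pair_mset_inj[of _ n _ m] by auto
  next
    fix x assume "x \<in> (SIGMA p:involutions n. compatible_seqs n m (descent_set p))"
    then show "(\<lambda>(p, f). pair_mset n p f) x \<in> sym_msets n m" using pair_mset_in_sym_msets by auto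
  next
    fix M assume "M \<in> sym_msets n m"
    then show "\<exists>x\<in>(SIGMA p:involutions n. compatible_seqs n m (descent_set p)). M = (\<lambda>(p, f). pair_mset n p f) x"
      by (elim pair_mset_surj) auto
  qed
  then have "card (sym_msets n m) = (\<Sum>p\<in>involutions n. card (compatible_seqs n m (descent_set p)))"
    by (simp add: bij_betw_same_card[symmetric] finite_involutions finite_compatible_seqs)
  then show ?thesis by (simp add: card_compatible_seqs des_eq_card_descent_set)
qed

section \<open>A recurrence for symmetric matrices\<close>

definition swap_orbit :: "'a \<times> 'a \<Rightarrow> ('a \<times> 'a) multiset" where
  "swap_orbit x = (if fst x = snd x then {#x#} else {#x, prod.swap x#})"

lemma image_swap_swap_orbit: "image_mset prod.swap (swap_orbit x) = swap_orbit x"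
  by (cases x) (auto simp: swap_orbit_def add_mset_commute)

lemma count_swap_orbit_self: "count (swap_orbit x) x = 1"
  by (cases x) (simp add: swap_orbit_def)

lemma size_swap_orbit: "size (swap_orbit x) = (if fst x = snd x then 1 else 2)"
  unfolding swap_orbit_def by simp

lemma set_swap_orbit: "x \<in> A \<times> A \<Longrightarrow> set_mset (swap_orbit x) \<subseteq> A \<times> A"
  by (cases x) (auto simp: swap_orbit_def)

lemma swap_orbit_subseteq:
  assumes sym: "image_mset prod.swap M = M" and x: "x \<in># M"
  shows "swap_orbit x \<subseteq># M"
proof (cases "fst x = snd x")
  case False
  have "count M (prod.swap x) = count M x" using count_image_swap_swap[of M x] sym by simp
  moreover have "prod.swap x \<noteq> x" using False by (cases x) auto
  ultimately have "prod.swap x \<in># M - {#x#}" using x by (simp add: in_diff_count)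
  then show ?thesis unfolding swap_orbit_def using False x by (simp add: insert_subset_eq_iff)
qed (simp add: swap_orbit_def x)

definition occurrences :: "nat \<Rightarrow> nat \<times> nat \<Rightarrow> nat \<Rightarrow> nat" where
  "occurrences m x n = (\<Sum>M\<in>sym_msets n m. count M x)"

lemma bij_betw_add_swap_orbit:
  assumes x: "x \<in> {..<m} \<times> {..<m}" and size: "size (swap_orbit x) \<le> n"
  shows "bij_betw (\<lambda>N. N + swap_orbit x)
    (sym_msets (n - size (swap_orbit x)) m) {M\<in>sym_msets n m. x \<in># M}"
proof (rule bij_betwI')
  fix N assume N: "N \<in> sym_msets (n - size (swap_orbit x)) m"
  have "set_mset (N + swap_orbit x) \<subseteq> {..<m} \<times> {..<m}"
    using N set_swap_orbit[OF x] unfolding sym_msets_def multisets_of_size_def by auto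
  moreover have "size (N + swap_orbit x) = n"
    using N size unfolding sym_msets_def multisets_of_size_def by simp
  moreover have "image_mset prod.swap (N + swap_orbit x) = N + swap_orbit x"
    using N image_swap_swap_orbit[of x] unfolding sym_msets_def by simp
  moreover have "x \<in># N + swap_orbit x"
    by (simp add: swap_orbit_def)
  ultimately show "N + swap_orbit x \<in> {M\<in>sym_msets n m. x \<in># M}"
    unfolding sym_msets_def multisets_of_size_def by simp
next
  fix M assume "M \<in> {M\<in>sym_msets n m. x \<in># M}"
  then have M: "M \<in> sym_msets n m" and sub: "swap_orbit x \<subseteq># M"
    using swap_orbit_subseteq[of M x] unfolding sym_msets_def by auto
  have "set_mset (M - swap_orbit x) \<subseteq> {..<m} \<times> {..<m}"
    using M unfolding sym_msets_def multisets_of_size_def by (auto dest: in_diffD)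
  moreover have "size (M - swap_orbit x) = n - size (swap_orbit x)"
    using M sub unfolding sym_msets_def multisets_of_size_def by (simp add: size_Diff_submset)
  moreover have "image_mset prod.swap (M - swap_orbit x) = M - swap_orbit x"
    using M sub image_swap_swap_orbit[of x] unfolding sym_msets_def by (simp add: image_mset_Diff)
  ultimately have "M - swap_orbit x \<in> sym_msets (n - size (swap_orbit x)) m"
    unfolding sym_msets_def multisets_of_size_def by simp
  moreover have "M = M - swap_orbit x + swap_orbit x" using sub by simp
  ultimately show "\<exists>N\<in>sym_msets (n - size (swap_orbit x)) m. M = N + swap_orbit x" by blast
qed simp

lemma occurrences_rec:
  assumes x: "x \<in> {..<m} \<times> {..<m}" and size: "size (swap_orbit x) \<le> n"
  shows "occurrences m x n =
    occurrences m x (n - size (swap_orbit x)) + card (sym_msets (n - size (swap_orbit x)) m)"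
proof -
  have "occurrences m x n = (\<Sum>M\<in>{M\<in>sym_msets n m. x \<in># M}. count M x)"
    unfolding occurrences_def
    by (rule sum.mono_neutral_right) (auto simp: finite_sym_msets count_eq_zero_iff)
  also have "\<dots> = (\<Sum>N\<in>sym_msets (n - size (swap_orbit x)) m. count (N + swap_orbit x) x)"
    by (rule sum.reindex_bij_betw[OF bij_betw_add_swap_orbit[OF x size], symmetric])
  also have "\<dots> = occurrences m x (n - size (swap_orbit x)) + card (sym_msets (n - size (swap_orbit x)) m)"
    unfolding occurrences_def by (simp add: count_swap_orbit_self sum_Suc)
  finally show ?thesis .
qed

lemma size_eq_sum_count:
  assumes "finite U" "set_mset M \<subseteq> U"
  shows "size M = (\<Sum>x\<in>U. count M x)"
  unfolding size_multiset_overloaded_eq using assms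
  by (intro sum.mono_neutral_left) (auto simp: count_eq_zero_iff)

lemma sum_occurrences: "(\<Sum>x\<in>{..<m} \<times> {..<m}. occurrences m x n) = n * card (sym_msets n m)"
proof -
  have "(\<Sum>x\<in>{..<m} \<times> {..<m}. occurrences m x n) = (\<Sum>M\<in>sym_msets n m. \<Sum>x\<in>{..<m} \<times> {..<m}. count M x)"
    unfolding occurrences_def by (rule sum.swap)
  also have "\<dots> = (\<Sum>M\<in>sym_msets n m. n)"
    by (intro sum.cong refl)
      (use size_eq_sum_count[of "{..<m} \<times> {..<m}"] in \<open>auto simp: sym_msets_def multisets_of_size_def\<close>)
  finally show ?thesis by simp
qed

text \<open>A diagonal pair has an orbit of size 1, so occurrences_rec is applied to it twice;
  every other pair has an orbit of size 2.\<close>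
lemma card_sym_msets_rec:
  assumes "2 \<le> n"
  shows "n * card (sym_msets n m) =
    m * card (sym_msets (n - 1) m) + (m * m + n - 2) * card (sym_msets (n - 2) m)"
proof -
  define U where "U = {..<m} \<times> {..<m}"
  define T where "T k = card (sym_msets k m)" for k
  have occ: "occurrences m x n = occurrences m x (n - 2) + T (n - 2) + (if fst x = snd x then T (n - 1) else 0)"
    if x: "x \<in> U" for x
  proof (cases "fst x = snd x")
    case True
    then have "size (swap_orbit x) = 1" by (simp add: size_swap_orbit)
    then show ?thesis
      using occurrences_rec[of x m n] occurrences_rec[of x m "n - 1"] x assms True
      unfolding U_def T_def by (simp add: numeral_2_eq_2)
  next
    case False
    then have "size (swap_orbit x) = 2" by (simp add: size_swap_orbit)
    then show ?thesis using occurrences_rec[of x m n] x assms False unfolding U_def T_def by simp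
  qed
  have diagonal: "card {x\<in>U. fst x = snd x} = m"
  proof -
    have "{x\<in>U. fst x = snd x} = (\<lambda>i. (i, i)) ` {..<m}" unfolding U_def by auto
    then show ?thesis by (simp add: card_image inj_on_def)
  qed
  have "n * T n = (\<Sum>x\<in>U. occurrences m x n)" using sum_occurrences unfolding U_def T_def by simp
  also have "\<dots> = (\<Sum>x\<in>U. occurrences m x (n - 2)) + card U * T (n - 2) + card {x\<in>U. fst x = snd x} * T (n - 1)"
    by (simp add: occ sum.distrib sum.If_cases U_def Int_def)
  also have "\<dots> = (n - 2) * T (n - 2) + m * m * T (n - 2) + m * T (n - 1)"
    using sum_occurrences diagonal unfolding U_def T_def by simp
  finally show ?thesis unfolding T_def using assms by (simp add: algebra_simps)
qed

section \<open>Binomial coefficients with an integer upper index\<close>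

text \<open>Negative upper indices give 0 (unlike gchoose), which keeps Pascal's rule valid
  for all integers.\<close>
definition zchoose :: "int \<Rightarrow> nat \<Rightarrow> int" where
  "zchoose a k = (if a < 0 then 0 else int (nat a choose k))"

lemma zchoose_pascal:
  assumes "1 \<le> k" "b = a + 1"
  shows "zchoose b k = zchoose a k + zchoose a (k - 1)"
proof (cases "a < 0")
  case False
  then have "nat b = Suc (nat a)" "k = Suc (k - 1)" using assms by simp_all
  then have "nat b choose k = (nat a choose k) + (nat a choose (k - 1))"
    by (metis binomial_Suc_Suc add.commute)
  then show ?thesis using False assms unfolding zchoose_def by simp
qed (use assms in \<open>auto simp: zchoose_def\<close>)

lemma zchoose_absorption:
  assumes "1 \<le> k" "a = y + int k - 1"
  shows "int k * zchoose a k = y * zchoose a (k - 1)"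
proof (cases "y < 0")
  case True
  then show ?thesis using assms unfolding zchoose_def by (auto simp: binomial_eq_0 nat_less_iff)
next
  case False
  define N where "N = nat a"
  have N: "int N = a" "y = int N - int k + 1" using False assms unfolding N_def by auto
  have "k * (N choose k) = (N - (k - 1)) * (N choose (k - 1))"
    using binomial_absorption[of "k - 1" N] binomial_absorb_comp[of N "k - 1"] assms by simp
  then have "int k * int (N choose k) = int (N - (k - 1)) * int (N choose (k - 1))"
    by (metis of_nat_mult)
  moreover have "int (N - (k - 1)) = y" using N False assms by linarith
  ultimately show ?thesis unfolding zchoose_def N(1)[symmetric] by simp
qed

text \<open>The next two identities rewrite m resp. m^2 + n - 2 times the binomials counting
  sym_msets (n - 1) m resp. sym_msets (n - 2) m in terms of those counting sym_msets n m;
  their coefficients are the coefficients of the recurrence.\<close>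
lemma zchoose_linear_identity:
  fixes m j :: int
  assumes "1 \<le> n"
  shows "(j + 1) * zchoose (m + int n - 1 - j) n + (int n - j - 1) * zchoose (m + int n - 2 - j) n
    = m * zchoose (m + int n - 2 - j) (n - 1)"
proof -
  define u where "u = zchoose (m + int n - 2 - j) n"
  define v where "v = zchoose (m + int n - 2 - j) (n - 1)"
  have "zchoose (m + int n - 1 - j) n = u + v"
    unfolding u_def v_def using assms by (intro zchoose_pascal) simp_all
  moreover have "int n * u = (m - 1 - j) * v"
    unfolding u_def v_def using assms by (intro zchoose_absorption) simp_all
  ultimately show ?thesis unfolding u_def[symmetric] v_def[symmetric] by algebra
qed

lemma zchoose_quadratic_identity:
  fixes m j :: int
  assumes "2 \<le> n"
  shows "((j + 1)^2 + int n - 2) * zchoose (m + int n - 1 - j) n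
      + (2 * (j + 1) * (int n - j - 2) - int n + 3) * zchoose (m + int n - 2 - j) n
      + ((int n - j - 2)^2 + int n - 2) * zchoose (m + int n - 3 - j) n
    = (m^2 + int n - 2) * zchoose (m + int n - 3 - j) (n - 2)"
proof -
  define Z where "Z = zchoose (m + int n - 3 - j) n"
  define X where "X = zchoose (m + int n - 3 - j) (n - 1)"
  define B where "B = zchoose (m + int n - 3 - j) (n - 2)"
  have n: "1 \<le> n" "1 \<le> n - 1" "n - 1 - 1 = n - 2" "int (n - 1) = int n - 1" using assms by auto
  have pascal1: "zchoose (m + int n - 2 - j) n = Z + X"
    unfolding Z_def X_def using n by (intro zchoose_pascal) simp_all
  have pascal2: "zchoose (m + int n - 2 - j) (n - 1) = X + B"
    unfolding X_def B_def using zchoose_pascal[of "n - 1" "m + int n - 2 - j" "m + int n - 3 - j"] n by simp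
  have pascal3: "zchoose (m + int n - 1 - j) n = Z + 2 * X + B"
    using zchoose_pascal[of n "m + int n - 1 - j" "m + int n - 2 - j"] pascal1 pascal2 n by simp
  have absorb1: "int n * Z = (m - 2 - j) * X"
    unfolding Z_def X_def using n by (intro zchoose_absorption) simp_all
  have absorb2: "(int n - 1) * X = (m - 1 - j) * B"
    unfolding X_def B_def using zchoose_absorption[of "n - 1" "m + int n - 3 - j" "m - 1 - j"] n by simp
  have "int n * (int n - 1) * (((j + 1)^2 + int n - 2) * (Z + 2 * X + B)
      + (2 * (j + 1) * (int n - j - 2) - int n + 3) * (Z + X) + ((int n - j - 2)^2 + int n - 2) * Z)
    = int n * (int n - 1) * ((m^2 + int n - 2) * B)"
    using absorb1 absorb2 by algebra
  moreover have "int n * (int n - 1) \<noteq> 0" using assms by simp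
  ultimately show ?thesis unfolding pascal1 pascal3 Z_def[symmetric] B_def[symmetric] by simp
qed

section \<open>Comparing coefficients\<close>

lemma Inv_neg: "k < 0 \<Longrightarrow> Inv n k = 0"
  unfolding Inv_def by simp

lemma Inv_ge:
  assumes "1 \<le> n" "int n \<le> k"
  shows "Inv n k = 0"
proof -
  have "int (des n p) \<noteq> k" for p using des_less[OF assms(1), of p] assms(2) by linarith
  then show ?thesis unfolding Inv_def by simp
qed

lemma card_sym_msets_expansion:
  assumes "1 \<le> n" "n \<le> N"
  shows "int (card (sym_msets n m)) = (\<Sum>j<N. Inv n (int j) * zchoose (int m + int n - 1 - int j) n)"
proof -
  have "card (sym_msets n m) = (\<Sum>j<N. \<Sum>p\<in>{p \<in> involutions n. des n p = j}. (m + n - 1 - des n p) choose n)"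
    unfolding card_sym_msets using des_less[OF assms(1)] assms(2)
    by (intro sum.group[symmetric]) (auto simp: finite_involutions intro: less_le_trans)
  also have "\<dots> = (\<Sum>j<N. card {p \<in> involutions n. des n p = j} * ((m + n - 1 - j) choose n))"
    by simp
  finally have "int (card (sym_msets n m)) =
      (\<Sum>j<N. int (card {p \<in> involutions n. des n p = j}) * int ((m + n - 1 - j) choose n))"
    by simp
  also have "\<dots> = (\<Sum>j<N. Inv n (int j) * zchoose (int m + int n - 1 - int j) n)"
  proof (intro sum.cong refl)
    fix j
    show "int (card {p \<in> involutions n. des n p = j}) * int ((m + n - 1 - j) choose n) =
        Inv n (int j) * zchoose (int m + int n - 1 - int j) n"
    proof (cases "j < n")
      case True
      then have "int m + int n - 1 - int j = int (m + n - 1 - j)" by simp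
      then show ?thesis unfolding Inv_def zchoose_def by (simp only: nat_int) simp
    next
      case False
      then have "{p \<in> involutions n. des n p = j} = {}" using des_less[OF assms(1)] by fastforce
      then have "card {p \<in> involutions n. des n p = j} = 0" by (simp only: card.empty)
      moreover have "Inv n (int j) = 0" using Inv_ge[OF assms(1)] False by simp
      ultimately show ?thesis by simp
    qed
  qed
  finally show ?thesis .
qed

lemma sum_lessThan_shift:
  fixes h :: "nat \<Rightarrow> 'a::comm_monoid_add"
  assumes "h 0 = 0" "h n = 0"
  shows "(\<Sum>k<n. h k) = (\<Sum>k<n. h (Suc k))"
proof -
  have "(\<Sum>k<n. h k) = (\<Sum>k<Suc n. h k)" using assms(2) by simp
  also have "\<dots> = (\<Sum>k<n. h (Suc k))" using assms(1) by (simp only: sum.lessThan_Suc_shift) simp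
  finally show ?thesis .
qed

lemma card_sym_msets_linear_transfer:
  assumes "2 \<le> n"
  shows "int m * int (card (sym_msets (n - 1) m)) =
    (\<Sum>k<n. ((int k + 1) * Inv (n - 1) (int k) + (int n - int k) * Inv (n - 1) (int k - 1))
       * zchoose (int m + int n - 1 - int k) n)"
proof -
  define I where "I k = Inv (n - 1) k" for k
  define c where "c k = zchoose (int m + int n - 1 - int k) n" for k
  have "int m * int (card (sym_msets (n - 1) m)) =
      (\<Sum>k<n. int m * (I (int k) * zchoose (int m + int (n - 1) - 1 - int k) (n - 1)))"
    using card_sym_msets_expansion[of "n - 1" n m] assms unfolding I_def by (simp add: sum_distrib_left)
  also have "\<dots> = (\<Sum>k<n. (int k + 1) * I (int k) * c k) + (\<Sum>k<n. (int n - int k - 1) * I (int k) * c (Suc k))"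
    unfolding sum.distrib[symmetric]
  proof (intro sum.cong refl)
    fix k
    have "int m * zchoose (int m + int (n - 1) - 1 - int k) (n - 1) =
        (int k + 1) * c k + (int n - int k - 1) * c (Suc k)"
      using zchoose_linear_identity[of n "int k" "int m"] assms unfolding c_def
      by (simp add: algebra_simps)
    then show "int m * (I (int k) * zchoose (int m + int (n - 1) - 1 - int k) (n - 1)) =
        (int k + 1) * I (int k) * c k + (int n - int k - 1) * I (int k) * c (Suc k)"
      by algebra
  qed
  also have "(\<Sum>k<n. (int n - int k - 1) * I (int k) * c (Suc k)) = (\<Sum>k<n. (int n - int k) * I (int k - 1) * c k)"
    using assms by (subst (2) sum_lessThan_shift) (simp_all add: I_def Inv_neg algebra_simps)
  finally show ?thesis unfolding I_def c_def by (simp add: sum.distrib[symmetric] algebra_simps)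
qed

lemma card_sym_msets_quadratic_transfer:
  assumes "3 \<le> n"
  shows "(int m ^ 2 + int n - 2) * int (card (sym_msets (n - 2) m)) =
    (\<Sum>k<n. (((int k + 1)^2 + int n - 2) * Inv (n - 2) (int k)
       + (2 * int k * (int n - int k - 1) - int n + 3) * Inv (n - 2) (int k - 1)
       + ((int n - int k)^2 + int n - 2) * Inv (n - 2) (int k - 2))
     * zchoose (int m + int n - 1 - int k) n)"
proof -
  define I where "I k = Inv (n - 2) k" for k
  define c where "c k = zchoose (int m + int n - 1 - int k) n" for k
  have I_vanishes: "I (- 1) = 0" "I (- 2) = 0" "I (int n - 2) = 0" "I (int n - 1) = 0"
    unfolding I_def using assms by (auto intro: Inv_neg Inv_ge)
  have "(int m ^ 2 + int n - 2) * int (card (sym_msets (n - 2) m)) =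
      (\<Sum>k<n. (int m ^ 2 + int n - 2) * (I (int k) * zchoose (int m + int (n - 2) - 1 - int k) (n - 2)))"
    using card_sym_msets_expansion[of "n - 2" n m] assms unfolding I_def by (simp add: sum_distrib_left)
  also have "\<dots> = (\<Sum>k<n. ((int k + 1)^2 + int n - 2) * I (int k) * c k)
      + (\<Sum>k<n. (2 * (int k + 1) * (int n - int k - 2) - int n + 3) * I (int k) * c (Suc k))
      + (\<Sum>k<n. ((int n - int k - 2)^2 + int n - 2) * I (int k) * c (Suc (Suc k)))"
    unfolding sum.distrib[symmetric]
  proof (intro sum.cong refl)
    fix k
    have "(int m ^ 2 + int n - 2) * zchoose (int m + int (n - 2) - 1 - int k) (n - 2) =
        ((int k + 1)^2 + int n - 2) * c k
      + (2 * (int k + 1) * (int n - int k - 2) - int n + 3) * c (Suc k)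
      + ((int n - int k - 2)^2 + int n - 2) * c (Suc (Suc k))"
      using zchoose_quadratic_identity[of n "int k" "int m"] assms unfolding c_def
      by (simp add: algebra_simps)
    then show "(int m ^ 2 + int n - 2) * (I (int k) * zchoose (int m + int (n - 2) - 1 - int k) (n - 2)) =
        ((int k + 1)^2 + int n - 2) * I (int k) * c k
      + (2 * (int k + 1) * (int n - int k - 2) - int n + 3) * I (int k) * c (Suc k)
      + ((int n - int k - 2)^2 + int n - 2) * I (int k) * c (Suc (Suc k))"
      by algebra
  qed
  also have "(\<Sum>k<n. (2 * (int k + 1) * (int n - int k - 2) - int n + 3) * I (int k) * c (Suc k)) =
      (\<Sum>k<n. (2 * int k * (int n - int k - 1) - int n + 3) * I (int k - 1) * c k)"
    using I_vanishes by (subst (2) sum_lessThan_shift) (simp_all add: algebra_simps)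
  also have "(\<Sum>k<n. ((int n - int k - 2)^2 + int n - 2) * I (int k) * c (Suc (Suc k))) =
      (\<Sum>k<n. ((int n - int k)^2 + int n - 2) * I (int k - 2) * c k)"
    using I_vanishes
    by (subst (2) sum_lessThan_shift, simp_all, subst sum_lessThan_shift) (simp_all add: algebra_simps)
  finally show ?thesis unfolding I_def c_def by (simp add: sum.distrib[symmetric] algebra_simps)
qed

definition recurrence_defect :: "nat \<Rightarrow> int \<Rightarrow> int" where
  "recurrence_defect n k = int n * Inv n k -
     ((k + 1) * Inv (n - 1) k
    + (int n - k) * Inv (n - 1) (k - 1)
    + ((k + 1)^2 + int n - 2) * Inv (n - 2) k
    + (2 * k * (int n - k - 1) - int n + 3) * Inv (n - 2) (k - 1)
    + ((int n - k)^2 + int n - 2) * Inv (n - 2) (k - 2))"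

lemma sum_recurrence_defect:
  assumes "3 \<le> n"
  shows "(\<Sum>k<n. recurrence_defect n (int k) * zchoose (int m + int n - 1 - int k) n) = 0"
proof -
  define c where "c k = zchoose (int m + int n - 1 - int k) n" for k
  define lin where "lin k = (k + 1) * Inv (n - 1) k + (int n - k) * Inv (n - 1) (k - 1)" for k
  define quad where "quad k = ((k + 1)^2 + int n - 2) * Inv (n - 2) k
    + (2 * k * (int n - k - 1) - int n + 3) * Inv (n - 2) (k - 1)
    + ((int n - k)^2 + int n - 2) * Inv (n - 2) (k - 2)" for k
  have "recurrence_defect n (int k) * c k =
      int n * (Inv n (int k) * c k) - lin (int k) * c k - quad (int k) * c k" for k
    unfolding recurrence_defect_def lin_def quad_def by algebra
  then have "(\<Sum>k<n. recurrence_defect n (int k) * c k) =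
      int n * (\<Sum>k<n. Inv n (int k) * c k) - (\<Sum>k<n. lin (int k) * c k) - (\<Sum>k<n. quad (int k) * c k)"
    by (simp only: sum_subtractf sum_distrib_left)
  also have "\<dots> = int n * int (card (sym_msets n m)) - int m * int (card (sym_msets (n - 1) m))
      - (int m ^ 2 + int n - 2) * int (card (sym_msets (n - 2) m))"
    using card_sym_msets_expansion[of n n m] card_sym_msets_linear_transfer[of n m]
      card_sym_msets_quadratic_transfer[of n m] assms
    unfolding c_def lin_def quad_def by simp
  also have "\<dots> = 0"
  proof -
    have "int (n * card (sym_msets n m)) =
        int (m * card (sym_msets (n - 1) m) + (m * m + n - 2) * card (sym_msets (n - 2) m))"
      using card_sym_msets_rec[of n m] assms by simp
    moreover have "int (m * m + n - 2) = int m ^ 2 + int n - 2"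
      using assms by (simp add: power2_eq_square)
    ultimately show ?thesis by simp
  qed
  finally show ?thesis unfolding c_def .
qed

text \<open>For m = k + 1 the terms with j > k vanish and the term j = k has coefficient 1.\<close>
lemma zchoose_triangular:
  fixes e :: "nat \<Rightarrow> int"
  assumes sum_eq_0: "\<And>m. (\<Sum>k<n. e k * zchoose (int m + int n - 1 - int k) n) = 0" and "k < n"
  shows "e k = 0"
  using \<open>k < n\<close>
proof (induction k rule: less_induct)
  case (less k)
  note IH = less.IH and k_less = less.prems
  have "(\<Sum>j<n. e j * zchoose (int (Suc k) + int n - 1 - int j) n) = (\<Sum>j<n. if j = k then e k else 0)"
  proof (intro sum.cong refl)
    fix j assume "j \<in> {..<n}"
    show "e j * zchoose (int (Suc k) + int n - 1 - int j) n = (if j = k then e k else 0)"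
    proof (cases j k rule: linorder_cases)
      case less
      then show ?thesis using IH[of j] k_less by simp
    next
      case equal
      then show ?thesis unfolding zchoose_def by simp
    next
      case greater
      then have "0 \<le> int (Suc k) + int n - 1 - int j" "int (Suc k) + int n - 1 - int j < int n"
        using \<open>j \<in> {..<n}\<close> by auto
      then show ?thesis using greater unfolding zchoose_def by (simp add: binomial_eq_0 nat_less_iff)
    qed
  qed
  then show ?case using sum_eq_0[of "Suc k"] k_less by simp
qed

lemma recurrence_defect_eq_0:
  assumes "3 \<le> n" "0 \<le> k"
  shows "recurrence_defect n k = 0"
proof (cases "k < int n")
  case True
  then have "nat k < n" using assms(2) by linarith
  then show ?thesis
    using zchoose_triangular[OF sum_recurrence_defect[OF assms(1)]] assms(2) by fastforce
next
  case False
  then show ?thesis unfolding recurrence_defect_def using assms(1) by (simp add: Inv_ge)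
qed

theorem theorem2p2:
  fixes n :: nat and k :: int
  assumes "n \<ge> 3" and "k \<ge> 0"
  shows "int n * Inv n k =
           (k + 1) * Inv (n - 1) k
         + (int n - k) * Inv (n - 1) (k - 1)
         + ((k + 1)^2 + int n - 2) * Inv (n - 2) k
         + (2 * k * (int n - k - 1) - int n + 3) * Inv (n - 2) (k - 1)
         + ((int n - k)^2 + int n - 2) * Inv (n - 2) (k - 2)"
  using recurrence_defect_eq_0[OF assms] unfolding recurrence_defect_def by simp

end
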